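(* Let $(X,\rho,\mu)$ be a $K$-doubling metric measure space, $(M,d)$ a complete metric space and $\mathcal D$ an $X$-distribution for $M$. If $\mathcal D$ is differentiably complete, then for every nonempty $A\subseteq X$ every function $f\colon A\to M$ is a.e. $\mathcal D$-differentiable on $A_f$. Conversely, if every function $f\colon X\to M$ is a.e. $\mathcal D$-differentiable on $A_f$, then $\mathcal D$ is differentiably complete.
   Context: A $K$-doubling metric measure space ($K>0$) is a triple $(X,\rho,\mu)$ where $(X,\rho)$ is a complete separable metric space and $\mu$ is a Borel-regular outer measure on $X$ with $0<\mu(B_{2r}(x))\le K\mu(B_r(x))<+\infty$ for all $x\in X$, $r>0$. A set $E\ni x$ is a $\mu$-neighborhood of $x$ if there is a Borel set $B\subseteq E$ with $\lim_{r\to0^+}\mu(B_r(x)\setminus B)/\mu(B_r(x))=0$; $x$ is a $\mu$-accumulation point of $A$ if $A\cap U\setminus\{x\}\ne\emptyset$ for every $\mu$-neighborhood $U$ of $x$; $\mu\text{-}\lim$ and $\mu\text{-}\limsup$ are the limit and upper limit along $\mu$-neighborhoods (e.g. $\mu\text{-}\limsup_{y\in A,y\to x}g(y)=\inf_U\sup_{y\in U\cap A\setminus\{x\}}g(y)$ over $\mu$-neighborhoods $U$ of $x$). For $x\in X$, $P\in M$, $\mathcal C_{x,P}$ is the set of classes $[F]$ of Lipschitz maps $F\colon B\to M$ defined on a metric neighborhood $B$ of $x$ with $F(x)=P$, modulo $F\sim G\iff\lim_{y\to x}d(F(y),G(y))/\rho(y,x)=0$. An $X$-distribution for $M$ is any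 subset $\mathcal D\subseteq\bigsqcup_{(x,P)}\mathcal C_{x,P}$, with $\mathcal D_{x,P}=\mathcal D\cap\mathcal C_{x,P}$. For $f\colon A\to M$ and an accumulation point $x\in A$ of $A$, $f$ is $\mathcal D$-differentiable at $x$ if some $[F]\in\mathcal D_{x,f(x)}$ satisfies $\lim_{y\in A,y\to x}d(f(y),F(y))/\rho(y,x)=0$; for a $\mu$-accumulation point $x\in A$, $f$ is approximately $\mathcal D$-differentiable at $x$ if some $[F]\in\mathcal D_{x,f(x)}$ satisfies $\mu\text{-}\lim_{y\in A,y\to x}d(f(y),F(y))/\rho(y,x)=0$. $A_f$ is the set of accumulation points $x\in A$ of $A$ with $\limsup_{y\in A,y\to x}d(f(y),f(x))/\rho(y,x)<+\infty$, and $A_f^\mu$ the set of $\mu$-accumulation points $x\in A$ of $A$ with $\mu\text{-}\limsup_{y\in A,y\to x}d(f(y),f(x))/\rho(y,x)<+\infty$. "$f$ is a.e. $\mathcal D$-differentiable on $A_f$" means: for every $\mu$-measurable $B\subseteq A_f$, $f$ is $\mathcal D$-differentiable at $\mu$-a.e. point of $B$ (similarly for the approximate notion on $A_f^\mu$). $\mathcal D$ is differentiably complete if for every nonempty closed $C\subseteq X$ and every Lipschitz $g\colon C\to M$, $g$ is a.e. approximately $\mathcal D$-differentiable on $A_g^\mu$. *)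

theory Defs
  imports "HOL-Analysis.Analysis"
begin

section \<open>Outer measures on the metric space X (= UNIV of a polish type)\<close>

definition outer_measure :: "('a set \<Rightarrow> ennreal) \<Rightarrow> bool" where
  "outer_measure mu \<longleftrightarrow> mu {} = 0 \<and> (\<forall>A B. A \<subseteq> B \<longrightarrow> mu A \<le> mu B) \<and>
     (\<forall>As :: nat \<Rightarrow> 'a set. mu (\<Union>(range As)) \<le> (\<Sum>i. mu (As i)))"

definition mu_measurable :: "('a set \<Rightarrow> ennreal) \<Rightarrow> 'a set \<Rightarrow> bool" where
  "mu_measurable mu E \<longleftrightarrow> (\<forall>T. mu T = mu (T \<inter> E) + mu (T - E))"

definition borel_regular_outer_measure :: "('a::topological_space set \<Rightarrow> ennreal) \<Rightarrow> bool" where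
  "borel_regular_outer_measure mu \<longleftrightarrow> outer_measure mu \<and>
     (\<forall>B \<in> sets borel. mu_measurable mu B) \<and>
     (\<forall>A. \<exists>B \<in> sets borel. A \<subseteq> B \<and> mu B = mu A)"

definition doubling_mms :: "real \<Rightarrow> ('a::polish_space set \<Rightarrow> ennreal) \<Rightarrow> bool" where
  "doubling_mms K mu \<longleftrightarrow> K > 0 \<and> borel_regular_outer_measure mu \<and>
     (\<forall>x r. r > 0 \<longrightarrow> 0 < mu (ball x (2*r)) \<and> mu (ball x (2*r)) \<le> ennreal K * mu (ball x r)
                       \<and> mu (ball x r) < \<infinity>)"

definition mu_nbhd :: "('a::metric_space set \<Rightarrow> ennreal) \<Rightarrow> 'a \<Rightarrow> 'a set \<Rightarrow> bool" where
  "mu_nbhd mu x E \<longleftrightarrow> x \<in> E \<and> (\<exists>B \<in> sets borel. B \<subseteq> E \<and>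
     ((\<lambda>r. enn2real (mu (ball x r - B)) / enn2real (mu (ball x r))) \<longlongrightarrow> 0) (at_right 0))"

definition mu_accumulation :: "('a::metric_space set \<Rightarrow> ennreal) \<Rightarrow> 'a \<Rightarrow> 'a set \<Rightarrow> bool" where
  "mu_accumulation mu x A \<longleftrightarrow> (\<forall>U. mu_nbhd mu x U \<longrightarrow> A \<inter> U - {x} \<noteq> {})"

definition mu_tendsto :: "('a::metric_space set \<Rightarrow> ennreal) \<Rightarrow> 'a \<Rightarrow> 'a set \<Rightarrow> ('a \<Rightarrow> real) \<Rightarrow> real \<Rightarrow> bool" where
  "mu_tendsto mu x A g L \<longleftrightarrow>
     (\<forall>e>0. \<exists>U. mu_nbhd mu x U \<and> (\<forall>y \<in> U \<inter> A - {x}. dist (g y) L < e))"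

definition mu_limsup :: "('a::metric_space set \<Rightarrow> ennreal) \<Rightarrow> 'a \<Rightarrow> 'a set \<Rightarrow> ('a \<Rightarrow> real) \<Rightarrow> ereal" where
  "mu_limsup mu x A g = (INF U \<in> {U. mu_nbhd mu x U}. SUP y \<in> U \<inter> A - {x}. ereal (g y))"

text \<open>A representative of an element of C_{x,P}: a pair (B, F) with B a metric
  neighbourhood of x and F : B \<rightarrow> M Lipschitz with F x = P (values of F outside B are irrelevant).\<close>
definition lip_rep :: "'a::metric_space \<Rightarrow> 'b::metric_space \<Rightarrow> ('a set \<times> ('a \<Rightarrow> 'b)) \<Rightarrow> bool" where
  "lip_rep x P BF \<longleftrightarrow> (case BF of (B, F) \<Rightarrow>
     (\<exists>U. open U \<and> x \<in> U \<and> U \<subseteq> B) \<and> (\<exists>L. L-lipschitz_on B F) \<and> F x = P)"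

definition germ_eq :: "'a::metric_space \<Rightarrow> ('a set \<times> ('a \<Rightarrow> 'b::metric_space)) \<Rightarrow> ('a set \<times> ('a \<Rightarrow> 'b)) \<Rightarrow> bool" where
  "germ_eq x BF CG \<longleftrightarrow> (case BF of (B, F) \<Rightarrow> case CG of (C, G) \<Rightarrow>
     ((\<lambda>y. dist (F y) (G y) / dist y x) \<longlongrightarrow> 0) (at x within (B \<inter> C)))"

definition germ_classes :: "'a::metric_space \<Rightarrow> 'b::metric_space \<Rightarrow> ('a set \<times> ('a \<Rightarrow> 'b)) set set" where
  "germ_classes x P = {c. \<exists>r. lip_rep x P r \<and> c = {s. lip_rep x P s \<and> germ_eq x r s}}"

text \<open>An X-distribution: a subset of the disjoint union of the C_{x,P}, tagged by (x,P).\<close>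
definition X_distribution :: "('a::metric_space \<times> 'b::metric_space \<times> ('a set \<times> ('a \<Rightarrow> 'b)) set) set \<Rightarrow> bool" where
  "X_distribution D \<longleftrightarrow> (\<forall>(x, P, c) \<in> D. c \<in> germ_classes x P)"

definition D_differentiable_at ::
  "('a::metric_space \<times> 'b::metric_space \<times> ('a set \<times> ('a \<Rightarrow> 'b)) set) set \<Rightarrow> 'a set \<Rightarrow> ('a \<Rightarrow> 'b) \<Rightarrow> 'a \<Rightarrow> bool" where
  "D_differentiable_at D A f x \<longleftrightarrow> x \<in> A \<and> x islimpt A \<and>
     (\<exists>c. (x, f x, c) \<in> D \<and> (\<exists>(B, F) \<in> c.
        ((\<lambda>y. dist (f y) (F y) / dist y x) \<longlongrightarrow> 0) (at x within A)))"

definition approx_D_differentiable_at ::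
  "('a::metric_space set \<Rightarrow> ennreal) \<Rightarrow> ('a \<times> 'b::metric_space \<times> ('a set \<times> ('a \<Rightarrow> 'b)) set) set \<Rightarrow> 'a set \<Rightarrow> ('a \<Rightarrow> 'b) \<Rightarrow> 'a \<Rightarrow> bool" where
  "approx_D_differentiable_at mu D A f x \<longleftrightarrow> x \<in> A \<and> mu_accumulation mu x A \<and>
     (\<exists>c. (x, f x, c) \<in> D \<and> (\<exists>(B, F) \<in> c.
        mu_tendsto mu x A (\<lambda>y. dist (f y) (F y) / dist y x) 0))"

definition lip_points :: "'a::metric_space set \<Rightarrow> ('a \<Rightarrow> 'b::metric_space) \<Rightarrow> 'a set" where
  "lip_points A f = {x \<in> A. x islimpt A \<and>
     Limsup (at x within A) (\<lambda>y. ereal (dist (f y) (f x) / dist y x)) < \<infinity>}"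

definition approx_lip_points :: "('a::metric_space set \<Rightarrow> ennreal) \<Rightarrow> 'a set \<Rightarrow> ('a \<Rightarrow> 'b::metric_space) \<Rightarrow> 'a set" where
  "approx_lip_points mu A f = {x \<in> A. mu_accumulation mu x A \<and>
     mu_limsup mu x A (\<lambda>y. dist (f y) (f x) / dist y x) < \<infinity>}"

definition ae_D_differentiable ::
  "('a::metric_space set \<Rightarrow> ennreal) \<Rightarrow> ('a \<times> 'b::metric_space \<times> ('a set \<times> ('a \<Rightarrow> 'b)) set) set \<Rightarrow> 'a set \<Rightarrow> ('a \<Rightarrow> 'b) \<Rightarrow> bool" where
  "ae_D_differentiable mu D A f \<longleftrightarrow> (\<forall>B. mu_measurable mu B \<and> B \<subseteq> lip_points A f \<longrightarrow>
     mu {x \<in> B. \<not> D_differentiable_at D A f x} = 0)"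

definition ae_approx_D_differentiable ::
  "('a::metric_space set \<Rightarrow> ennreal) \<Rightarrow> ('a \<times> 'b::metric_space \<times> ('a set \<times> ('a \<Rightarrow> 'b)) set) set \<Rightarrow> 'a set \<Rightarrow> ('a \<Rightarrow> 'b) \<Rightarrow> bool" where
  "ae_approx_D_differentiable mu D A f \<longleftrightarrow> (\<forall>B. mu_measurable mu B \<and> B \<subseteq> approx_lip_points mu A f \<longrightarrow>
     mu {x \<in> B. \<not> approx_D_differentiable_at mu D A f x} = 0)"

definition differentiably_complete ::
  "('a::metric_space set \<Rightarrow> ennreal) \<Rightarrow> ('a \<times> 'b::metric_space \<times> ('a set \<times> ('a \<Rightarrow> 'b)) set) set \<Rightarrow> bool" where
  "differentiably_complete mu D \<longleftrightarrow> (\<forall>C g. closed C \<and> C \<noteq> {} \<and> (\<exists>L. L-lipschitz_on C g) \<longrightarrow>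
     ae_approx_D_differentiable mu D C g)"

end

theory Submission
  imports Defs
begin

text \<open>
  Both directions rest on the Lebesgue density theorem for the doubling measure, proved by a
  Vitali covering argument: almost every point of a Borel set \<open>H\<close> is a density point of \<open>H\<close>,
  so that \<open>H\<close> is a \<open>\<mu>\<close>-neighbourhood of almost all of its points.

  For the first direction, \<open>A\<^sub>f\<close> is covered by countably many pieces \<open>P\<close> of small diameter on
  each of which \<open>f\<close> is Lipschitz at a fixed scale. On such a piece \<open>f\<close> extends to a Lipschitz map
  \<open>g\<close> on the closure of \<open>P\<close> (this uses completeness of \<open>M\<close>), which by differentiable completeness
  is approximately differentiable almost everywhere. Let \<open>x\<close> be such a point that is moreover a
  density point of a Borel hull of \<open>P\<close>. By doubling, every \<open>y\<close> close to \<open>x\<close> has a point \<open>z\<close> of \<open>P\<close>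
  with \<open>\<rho>(y, z) \<le> \<eta> \<rho>(y, x)\<close> at which the approximate first-order estimate holds, and the
  Lipschitz bounds of \<open>f\<close> at \<open>z\<close> and of the germ representative carry the estimate from \<open>z\<close> to \<open>y\<close>.

  For the converse, a Lipschitz map \<open>g\<close> on a closed set \<open>C\<close> is extended to \<open>X\<close> through almost
  nearest points of \<open>C\<close>. The extension is Lipschitz at every point of \<open>C\<close>, and since metric balls
  are \<open>\<mu>\<close>-neighbourhoods, its differential at a \<open>\<mu>\<close>-accumulation point of \<open>C\<close> is an approximate
  differential of \<open>g\<close>.
\<close>

section \<open>Vitali covering in separable metric spaces\<close>

lemma emeasure_UN_countable_le:
  assumes "countable I" and sets: "\<And>i. i \<in> I \<Longrightarrow> X i \<in> sets M"
  shows "emeasure M (\<Union>i\<in>I. X i) \<le> (\<integral>\<^sup>+i. emeasure M (X i) \<partial>count_space I)"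
proof -
  have "(\<Union>i\<in>I. X i) \<in> sets M"
    using assms by (intro sets.countable_UN') auto
  then have "emeasure M (\<Union>i\<in>I. X i) = (\<integral>\<^sup>+x. indicator (\<Union>i\<in>I. X i) x \<partial>M)"
    by simp
  also have "\<dots> \<le> (\<integral>\<^sup>+x. \<integral>\<^sup>+i. indicator (X i) x \<partial>count_space I \<partial>M)"
  proof (rule nn_integral_mono)
    fix x
    show "indicator (\<Union>i\<in>I. X i) x \<le> ((\<integral>\<^sup>+i. indicator (X i) x \<partial>count_space I) :: ennreal)"
    proof (cases "x \<in> (\<Union>i\<in>I. X i)")
      case True
      then obtain j where "j \<in> I" "x \<in> X j" by blast
      then show ?thesis using True nn_integral_ge_point[of j I "\<lambda>i. indicator (X i) x"] by simp
    qed simp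
  qed
  also have "\<dots> = (\<integral>\<^sup>+i. \<integral>\<^sup>+x. indicator (X i) x \<partial>M \<partial>count_space I)"
    using assms by (intro nn_integral_count_space_nn_integral) auto
  also have "\<dots> = (\<integral>\<^sup>+i. emeasure M (X i) \<partial>count_space I)"
    using sets by (simp cong: nn_integral_cong_simp)
  finally show ?thesis .
qed

text \<open>
  The invariant of the Zorn argument below: once every ball meets a maximal such family, its
  centre lies within three radii of the centre of a member.
\<close>

definition Vitali_family :: "('i \<Rightarrow> 'a::metric_space) \<Rightarrow> ('i \<Rightarrow> real) \<Rightarrow> 'i set \<Rightarrow> 'i set \<Rightarrow> bool" where
  "Vitali_family a r I C \<longleftrightarrow> C \<subseteq> I \<and> pairwise (\<lambda>i j. disjnt (ball (a i) (r i)) (ball (a j) (r j))) C \<and>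
     (\<forall>i\<in>I. (\<exists>j\<in>C. ball (a i) (r i) \<inter> ball (a j) (r j) \<noteq> {}) \<longrightarrow>
        (\<exists>j\<in>C. ball (a i) (r i) \<inter> ball (a j) (r j) \<noteq> {} \<and> r i < 2 * r j))"

lemma Vitali_family_chain_Union:
  assumes "\<C> \<in> chains {C. Vitali_family a r I C}"
  shows "Vitali_family a r I (\<Union>\<C>)"
proof -
  have family: "\<And>C. C \<in> \<C> \<Longrightarrow> Vitali_family a r I C" and chain: "chain\<^sub>\<subseteq> \<C>"
    using assms by (auto simp: chains_def)
  have "pairwise (\<lambda>i j. disjnt (ball (a i) (r i)) (ball (a j) (r j))) (\<Union>\<C>)"
    using family by (intro pairwise_chain_Union[OF _ chain]) (auto simp: Vitali_family_def)
  moreover have "\<exists>k\<in>\<Union>\<C>. ball (a i) (r i) \<inter> ball (a k) (r k) \<noteq> {} \<and> r i < 2 * r k"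
    if "i \<in> I" "j \<in> C" "C \<in> \<C>" "ball (a i) (r i) \<inter> ball (a j) (r j) \<noteq> {}" for i j C
    using that family[of C] unfolding Vitali_family_def by blast
  ultimately show ?thesis
    using family unfolding Vitali_family_def by blast
qed

lemma Vitali_family_maximal_meets:
  assumes r: "\<And>i. i \<in> I \<Longrightarrow> 0 < r i \<and> r i \<le> R" and C: "Vitali_family a r I C"
    and maximal: "\<And>X. Vitali_family a r I X \<Longrightarrow> C \<subseteq> X \<Longrightarrow> X = C" and i: "i \<in> I"
  shows "\<exists>j\<in>C. ball (a i) (r i) \<inter> ball (a j) (r j) \<noteq> {}"
proof (rule ccontr)
  define G where "G = {i \<in> I. \<forall>j\<in>C. ball (a i) (r i) \<inter> ball (a j) (r j) = {}}"
  assume "\<not> ?thesis"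
  then have "i \<in> G"
    using i by (auto simp: G_def)
  have bdd: "bdd_above (r ` G)"
    using r by (intro bdd_aboveI[of _ R]) (auto simp: G_def)
  have le_Sup: "r k \<le> Sup (r ` G)" if "k \<in> G" for k
    using that bdd by (simp add: cSup_upper)
  then have "Sup (r ` G) / 2 < Sup (r ` G)"
    using r[OF i] \<open>i \<in> G\<close> by fastforce
  then obtain i0 where i0: "i0 \<in> G" "Sup (r ` G) / 2 < r i0"
    using less_cSup_iff[of "r ` G"] \<open>i \<in> G\<close> bdd by blast
  \<comment> \<open>\<open>i0\<close> has more than half the largest radius among the balls missing \<open>C\<close>, so it can be added.\<close>
  have "Vitali_family a r I (insert i0 C)"
    unfolding Vitali_family_def
  proof (intro conjI ballI impI)
    show "insert i0 C \<subseteq> I"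
      using C i0(1) by (auto simp: Vitali_family_def G_def)
    show "pairwise (\<lambda>i j. disjnt (ball (a i) (r i)) (ball (a j) (r j))) (insert i0 C)"
      using C i0(1) unfolding Vitali_family_def pairwise_insert G_def by (auto simp: disjnt_def Int_commute)
    fix k assume k: "k \<in> I" "\<exists>j\<in>insert i0 C. ball (a k) (r k) \<inter> ball (a j) (r j) \<noteq> {}"
    show "\<exists>j\<in>insert i0 C. ball (a k) (r k) \<inter> ball (a j) (r j) \<noteq> {} \<and> r k < 2 * r j"
    proof (cases "\<exists>j\<in>C. ball (a k) (r k) \<inter> ball (a j) (r j) \<noteq> {}")
      case True
      then show ?thesis
        using C k(1) unfolding Vitali_family_def by blast
    next
      case False
      then have "k \<in> G" "ball (a k) (r k) \<inter> ball (a i0) (r i0) \<noteq> {}"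
        using k by (auto simp: G_def)
      then show ?thesis
        using le_Sup i0(2) by force
    qed
  qed
  then have "i0 \<in> C"
    using maximal[of "insert i0 C"] by blast
  then have "ball (a i0) (r i0) = {}"
    using i0(1) unfolding G_def by blast
  moreover have "0 < r i0"
    using r i0(1) by (simp add: G_def)
  ultimately show False
    by simp
qed

lemma Vitali_covering_metric:
  fixes a :: "'i \<Rightarrow> 'a::{metric_space, second_countable_topology}"
  assumes r: "\<And>i. i \<in> I \<Longrightarrow> 0 < r i \<and> r i \<le> R"
  obtains C where "countable C" "C \<subseteq> I"
    "pairwise (\<lambda>i j. disjnt (ball (a i) (r i)) (ball (a j) (r j))) C"
    "\<And>i. i \<in> I \<Longrightarrow> \<exists>j\<in>C. dist (a i) (a j) < 3 * r j"
proof -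
  have "\<forall>\<C>\<in>chains {C. Vitali_family a r I C}. \<Union>\<C> \<in> {C. Vitali_family a r I C}"
    using Vitali_family_chain_Union by blast
  from Zorn_Lemma[OF this] obtain C where C: "Vitali_family a r I C"
    and maximal: "\<And>X. Vitali_family a r I X \<Longrightarrow> C \<subseteq> X \<Longrightarrow> X = C"
    by blast
  let ?B = "\<lambda>i. ball (a i) (r i)"
  have pw: "pairwise (\<lambda>i j. disjnt (?B i) (?B j)) C" and "C \<subseteq> I"
    using C by (simp_all add: Vitali_family_def)
  show thesis
  proof
    show "pairwise (\<lambda>i j. disjnt (?B i) (?B j)) C" "C \<subseteq> I"
      by (fact pw, fact \<open>C \<subseteq> I\<close>)
    show "countable C"
    proof (rule countable_image_inj_on)
      show "countable (?B ` C)"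
        by (intro countable_disjoint_open_subsets pairwise_imageI) (use pw in \<open>auto simp: pairwise_def\<close>)
      have "a i \<in> ?B i" if "i \<in> C" for i
        using r \<open>C \<subseteq> I\<close> that by auto
      then show "inj_on ?B C"
        using pw unfolding inj_on_def pairwise_def disjnt_def by blast
    qed
    fix i assume i: "i \<in> I"
    then obtain j where j: "j \<in> C" "?B i \<inter> ?B j \<noteq> {}" "r i < 2 * r j"
      using Vitali_family_maximal_meets[OF r C maximal i] C unfolding Vitali_family_def by blast
    then obtain w where "dist (a i) w < r i" "dist (a j) w < r j"
      by auto
    then have "dist (a i) (a j) < 3 * r j"
      using j(3) dist_triangle3[of "a i" "a j" w] by (simp add: dist_commute)
    then show "\<exists>j\<in>C. dist (a i) (a j) < 3 * r j"
      using j(1) by blast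
  qed
qed

lemma ennreal_pos_if_le_plus_half:
  fixes b s :: ennreal
  assumes "b \<le> s + ennreal (1 / 2) * b" "0 < b" "b < \<infinity>"
  shows "0 < s"
proof (rule ccontr)
  assume "\<not> 0 < s"
  then have "b \<le> ennreal (1 / 2) * b" using assms(1) by simp
  moreover obtain b' where b': "b = ennreal b'" "0 < b'"
    using assms(2,3) by (cases b) auto
  moreover have "ennreal (1 / 2) * ennreal b' = ennreal (b' / 2)"
    using b' by (subst ennreal_mult[symmetric]) auto
  ultimately show False
    by (simp add: ennreal_le_iff)
qed

lemma sigma_algebra_borel: "sigma_algebra UNIV (sets borel)"
  by (metis sets.sigma_algebra_axioms space_borel)

locale doubling_space =
  fixes K :: real and mu :: "'a::polish_space set \<Rightarrow> ennreal"
  assumes doubling_mms: "doubling_mms K mu"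
begin

lemma K_pos: "0 < K"
  using doubling_mms by (simp add: doubling_mms_def)

lemma outer_measure_mu: "outer_measure mu"
  using doubling_mms by (simp add: doubling_mms_def borel_regular_outer_measure_def)

lemma mu_mono: "A \<subseteq> B \<Longrightarrow> mu A \<le> mu B"
  using outer_measure_mu by (simp add: outer_measure_def)

lemma mu_empty [simp]: "mu {} = 0"
  using outer_measure_mu by (simp add: outer_measure_def)

lemma mu_countably_subadditive: "mu (\<Union>i. A i) \<le> (\<Sum>i. mu (A i))"
  using outer_measure_mu unfolding outer_measure_def by blast

lemma mu_subadditive: "mu (A \<union> B) \<le> mu A + mu B"
proof -
  have "(\<Sum>i. mu (if i = 0 then A else if i = 1 then B else {})) = mu A + mu B"
    by (subst suminf_finite[of "{0, 1}"]) auto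
  moreover have "(\<Union>i. if i = (0::nat) then A else if i = 1 then B else {}) = A \<union> B"
    by (auto split: if_splits)
  ultimately show ?thesis
    using mu_countably_subadditive[of "\<lambda>i. if i = 0 then A else if i = 1 then B else {}"] by simp
qed

lemma mu_split_borel: "S \<in> sets borel \<Longrightarrow> mu T = mu (T \<inter> S) + mu (T - S)"
  using doubling_mms
  unfolding doubling_mms_def borel_regular_outer_measure_def mu_measurable_def by blast

lemma borel_superset_same_measure: "\<exists>B\<in>sets borel. A \<subseteq> B \<and> mu B = mu A"
  using doubling_mms unfolding doubling_mms_def borel_regular_outer_measure_def by blast

lemma mu_ball_finite: "mu (ball x r) < \<infinity>"
proof (cases "0 < r")
  case True
  then show ?thesis using doubling_mms unfolding doubling_mms_def by blast
qed (simp add: ball_empty)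

lemma mu_ball_pos:
  assumes "0 < r"
  shows "0 < mu (ball x r)"
proof -
  have "0 < r / 2"
    using assms by simp
  then have "0 < mu (ball x (2 * (r / 2)))"
    using doubling_mms unfolding doubling_mms_def by blast
  then show ?thesis by simp
qed

lemma mu_ball_doubling_power:
  assumes "0 < r"
  shows "mu (ball x (2 ^ m * r)) \<le> ennreal (K ^ m) * mu (ball x r)"
proof (induction m)
  case (Suc m)
  have "mu (ball x (2 ^ Suc m * r)) \<le> ennreal K * mu (ball x (2 ^ m * r))"
    using doubling_mms assms unfolding doubling_mms_def by (simp add: mult.assoc)
  also have "\<dots> \<le> ennreal K * (ennreal (K ^ m) * mu (ball x r))"
    using Suc by (intro mult_left_mono) auto
  also have "\<dots> = ennreal (K ^ Suc m) * mu (ball x r)"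
    using K_pos by (simp add: ennreal_mult mult.assoc)
  finally show ?case .
qed simp

lemma mu_ball_le_dilated_ball:
  assumes "0 < s" "dist x y + R \<le> 2 ^ m * s"
  shows "mu (ball x R) \<le> ennreal (K ^ m) * mu (ball y s)"
proof -
  have "ball x R \<subseteq> ball y (2 ^ m * s)"
  proof
    fix w assume "w \<in> ball x R"
    then show "w \<in> ball y (2 ^ m * s)"
      using assms(2) dist_triangle[of y w x] by (simp add: dist_commute)
  qed
  then have "mu (ball x R) \<le> mu (ball y (2 ^ m * s))"
    by (rule mu_mono)
  also have "\<dots> \<le> ennreal (K ^ m) * mu (ball y s)"
    by (rule mu_ball_doubling_power[OF assms(1)])
  finally show ?thesis .
qed

lemma null_subset: "mu N = 0 \<Longrightarrow> A \<subseteq> N \<Longrightarrow> mu A = 0"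
  using mu_mono[of A N] by simp

lemma null_Un: "mu A = 0 \<Longrightarrow> mu B = 0 \<Longrightarrow> mu (A \<union> B) = 0"
  using mu_subadditive[of A B] by simp

lemma null_UN: "(\<And>i::nat. mu (N i) = 0) \<Longrightarrow> mu (\<Union>i. N i) = 0"
  using mu_countably_subadditive[of N] by simp

lemma mu_measurable_borel: "S \<in> sets borel \<Longrightarrow> mu_measurable mu S"
  unfolding mu_measurable_def using mu_split_borel by blast

lemma mu_measurable_Diff_null:
  assumes S: "mu_measurable mu S" and N: "mu N = 0"
  shows "mu_measurable mu (S - N)"
  unfolding mu_measurable_def
proof
  fix T
  have le: "mu T \<le> mu (T \<inter> (S - N)) + mu (T - (S - N))"
    using mu_subadditive[of "T \<inter> (S - N)" "T - (S - N)"] by (simp only: Int_Diff_Un)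
  have "mu (T - (S - N)) \<le> mu ((T - S) \<union> (T \<inter> N))"
    by (rule mu_mono) blast
  also have "\<dots> \<le> mu (T - S) + mu (T \<inter> N)"
    by (rule mu_subadditive)
  also have "mu (T \<inter> N) = 0"
    using null_subset[OF N, of "T \<inter> N"] by blast
  finally have "mu (T - (S - N)) \<le> mu (T - S)"
    by simp
  moreover have "mu (T \<inter> (S - N)) \<le> mu (T \<inter> S)"
    by (rule mu_mono) blast
  ultimately have "mu (T \<inter> (S - N)) + mu (T - (S - N)) \<le> mu (T \<inter> S) + mu (T - S)"
    by (rule add_mono[rotated])
  also have "\<dots> = mu T"
    using S unfolding mu_measurable_def by (metis (no_types))
  finally show "mu T = mu (T \<inter> (S - N)) + mu (T - (S - N))"
    using le by (rule antisym[rotated])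
qed

lemma countably_additive_mu: "countably_additive (sets borel) mu"
proof -
  interpret Pow: sigma_algebra "UNIV :: 'a set" "Pow UNIV"
    by (rule sigma_algebra_Pow)
  have "outer_measure_space (Pow UNIV) mu"
    unfolding outer_measure_space_def positive_def increasing_def countably_subadditive_def
    by (simp add: mu_mono mu_countably_subadditive)
  then have "measure_space UNIV (lambda_system UNIV (Pow UNIV) mu) mu"
    by (rule Pow.caratheodory_lemma)
  moreover have "sets borel \<subseteq> lambda_system UNIV (Pow UNIV) mu"
  proof
    fix S :: "'a set" assume S: "S \<in> sets borel"
    have "mu (S \<inter> T) + mu ((UNIV - S) \<inter> T) = mu T" for T
    proof -
      have "S \<inter> T = T \<inter> S" "(UNIV - S) \<inter> T = T - S" by blast+
      then show ?thesis using mu_split_borel[OF S, of T] by simp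
    qed
    then show "S \<in> lambda_system UNIV (Pow UNIV) mu"
      by (simp add: lambda_system_def)
  qed
  ultimately show ?thesis
    unfolding measure_space_def countably_additive_def by blast
qed

definition borel_mu :: "'a measure" where
  "borel_mu = measure_of UNIV (sets borel) mu"

lemma sets_borel_mu [simp, measurable_cong]: "sets borel_mu = sets borel"
  unfolding borel_mu_def by (simp add: sigma_algebra.sigma_sets_eq[OF sigma_algebra_borel])

lemma emeasure_borel_mu: "S \<in> sets borel \<Longrightarrow> emeasure borel_mu S = mu S"
  unfolding borel_mu_def
  by (rule emeasure_measure_of_sigma[OF sigma_algebra_borel])
    (auto simp: positive_def countably_additive_mu)

lemma open_superset_small_excess:
  assumes S: "S \<in> sets borel" "S \<subseteq> ball z R" and "0 < e"
  obtains V where "open V" "S \<subseteq> V" "mu (V - S) < ennreal e"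
proof -
  define M where "M = density borel_mu (indicator (ball z R))"
  have sets_M: "sets M = sets borel" and emeasure_M: "\<And>T. T \<in> sets borel \<Longrightarrow> emeasure M T = mu (ball z R \<inter> T)"
    by (auto simp: M_def emeasure_restricted emeasure_borel_mu)
  have "emeasure M (space M) \<noteq> \<infinity>"
    using emeasure_M[of UNIV] mu_ball_finite[of z R] sets_eq_imp_space_eq[OF sets_M] by simp
  then have "emeasure M S = (INF U \<in> {U. S \<subseteq> U \<and> open U}. emeasure M U)"
    using outer_regular[OF sets_M] S by blast
  moreover have "mu S < \<infinity>"
    using mu_mono[OF S(2)] mu_ball_finite[of z R] by simp
  moreover have "emeasure M S = mu S"
    using emeasure_M S by (simp add: Int_absorb1)
  moreover have "mu S < mu S + ennreal e"
    using \<open>mu S < \<infinity>\<close> \<open>0 < e\<close> ennreal_add_left_cancel_less[of "mu S" 0 "ennreal e"] by simp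
  ultimately have "(INF U \<in> {U. S \<subseteq> U \<and> open U}. emeasure M U) < mu S + ennreal e"
    by simp
  then obtain U where U: "S \<subseteq> U" "open U" "emeasure M U < mu S + ennreal e"
    unfolding INF_less_iff by blast
  then have U3: "mu (ball z R \<inter> U) < mu S + ennreal e"
    using emeasure_M[of U] by simp
  show thesis
  proof
    show "open (ball z R \<inter> U)" "S \<subseteq> ball z R \<inter> U"
      using U S by auto
    have "mu (ball z R \<inter> U) = mu S + mu (ball z R \<inter> U - S)"
      using mu_split_borel[OF S(1), of "ball z R \<inter> U"] U(1) S(2) by (simp add: Int_absorb1)
    then show "mu (ball z R \<inter> U - S) < ennreal e"
      using U3 by (simp add: ennreal_add_left_cancel_less)
  qed
qed

section \<open>Density points and the Lebesgue density theorem\<close>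

text \<open>
  Density one of \<open>B\<close> at \<open>x\<close>, stated in \<open>ennreal\<close> instead of through the real ratio of
  \<^const>\<open>mu_nbhd\<close>; the two agree by \<open>mu_nbhd_iff\<close>.
\<close>

definition density_point :: "'a \<Rightarrow> 'a set \<Rightarrow> bool" where
  "density_point x B \<longleftrightarrow>
     (\<forall>e>0. \<forall>\<^sub>F r in at_right 0. mu (ball x r - B) \<le> ennreal e * mu (ball x r))"

lemma density_ratio_le_iff:
  assumes "0 < r" "0 \<le> e"
  shows "enn2real (mu (ball x r - B)) / enn2real (mu (ball x r)) \<le> e \<longleftrightarrow>
         mu (ball x r - B) \<le> ennreal e * mu (ball x r)"
proof -
  have "mu (ball x r - B) \<le> mu (ball x r)"
    by (rule mu_mono) blast
  then obtain a where a: "mu (ball x r - B) = ennreal a" "0 \<le> a"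
    using mu_ball_finite[of x r] by (cases "mu (ball x r - B)") auto
  obtain b where b: "mu (ball x r) = ennreal b" "0 < b"
    using mu_ball_finite[of x r] mu_ball_pos[OF assms(1), of x] by (cases "mu (ball x r)") auto
  show ?thesis
    using a b assms by (simp add: pos_divide_le_eq ennreal_mult[symmetric] ennreal_le_iff)
qed

lemma density_ratio_tendsto_0_iff:
  "((\<lambda>r. enn2real (mu (ball x r - B)) / enn2real (mu (ball x r))) \<longlongrightarrow> 0) (at_right 0)
     \<longleftrightarrow> density_point x B"
  (is "(?ratio \<longlongrightarrow> 0) _ \<longleftrightarrow> _")
proof
  assume lim: "(?ratio \<longlongrightarrow> 0) (at_right 0)"
  show "density_point x B"
    unfolding density_point_def
  proof (intro allI impI)
    fix e :: real assume "0 < e"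
    with lim have "\<forall>\<^sub>F r in at_right 0. ?ratio r < e"
      by (rule order_tendstoD(2))
    with eventually_at_right_less[of 0]
    show "\<forall>\<^sub>F r in at_right 0. mu (ball x r - B) \<le> ennreal e * mu (ball x r)"
      by eventually_elim (use \<open>0 < e\<close> in \<open>auto simp: density_ratio_le_iff[symmetric] intro: less_imp_le\<close>)
  qed
next
  assume dp: "density_point x B"
  show "(?ratio \<longlongrightarrow> 0) (at_right 0)"
  proof (rule order_tendstoI)
    fix e :: real assume "e < 0"
    then show "\<forall>\<^sub>F r in at_right 0. e < ?ratio r"
      by (intro always_eventually) (simp add: less_le_trans[OF _ divide_nonneg_nonneg])
  next
    fix e :: real assume "0 < e"
    with dp have "\<forall>\<^sub>F r in at_right 0. mu (ball x r - B) \<le> ennreal (e / 2) * mu (ball x r)"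
      unfolding density_point_def by simp
    with eventually_at_right_less[of 0]
    show "\<forall>\<^sub>F r in at_right 0. ?ratio r < e"
    proof eventually_elim
      case (elim r)
      then have "?ratio r \<le> e / 2"
        using \<open>0 < e\<close> by (subst density_ratio_le_iff) auto
      then show "?ratio r < e"
        using \<open>0 < e\<close> by linarith
    qed
  qed
qed

lemma mu_nbhd_iff: "mu_nbhd mu x E \<longleftrightarrow> x \<in> E \<and> (\<exists>B\<in>sets borel. B \<subseteq> E \<and> density_point x B)"
  unfolding mu_nbhd_def density_ratio_tendsto_0_iff ..

lemma density_point_ball: "0 < \<delta> \<Longrightarrow> density_point x (ball x \<delta>)"
  unfolding density_point_def eventually_at_right_field
  by (auto intro!: exI[of _ \<delta>] simp: subset_ball[THEN Diff_eq_empty_iff[THEN iffD2]])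

lemma mu_nbhd_ball: "0 < \<delta> \<Longrightarrow> mu_nbhd mu x (ball x \<delta>)"
  by (auto simp: mu_nbhd_iff density_point_ball)

lemma mu_nbhd_mono: "mu_nbhd mu x U \<Longrightarrow> U \<subseteq> V \<Longrightarrow> mu_nbhd mu x V"
  unfolding mu_nbhd_def by blast

lemma mu_nbhd_UNIV: "mu_nbhd mu x UNIV"
  using mu_nbhd_mono[OF mu_nbhd_ball[of 1 x]] by simp

text \<open>
  By doubling, \<open>ball y (\<eta> * t)\<close> carries at least the fraction \<open>1 / K ^ m\<close> of the measure of
  \<open>ball x (2 * t)\<close>, while \<open>B1\<close> and \<open>B2\<close> each miss at most a quarter of that fraction.
\<close>

lemma small_ball_meets_sets_of_large_density:
  assumes t: "0 < t" "dist y x = t" and \<eta>: "0 < \<eta>" "\<eta> \<le> 1" "3 \<le> 2 ^ m * \<eta>"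
    and B1: "mu (ball x (2 * t) - B1) \<le> ennreal (1 / (4 * K ^ m)) * mu (ball x (2 * t))"
    and B2: "mu (ball x (2 * t) - B2) \<le> ennreal (1 / (4 * K ^ m)) * mu (ball x (2 * t))"
  shows "0 < mu (ball y (\<eta> * t) \<inter> B1 \<inter> B2)"
proof -
  define b where "b = mu (ball y (\<eta> * t))"
  have "0 < \<eta> * t"
    using \<eta> t by simp
  have "mu (ball x (2 * t)) \<le> ennreal (K ^ m) * b"
    unfolding b_def using \<eta>(3) t \<open>0 < \<eta> * t\<close>
    by (intro mu_ball_le_dilated_ball) (auto simp: dist_commute intro: mult_right_mono[of 3 _ t, simplified])
  then have quarter: "ennreal (1 / (4 * K ^ m)) * mu (ball x (2 * t)) \<le> ennreal (1 / 4) * b"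
    using K_pos by (auto simp: ennreal_mult[symmetric] mult.assoc[symmetric] intro: order_trans[OF mult_left_mono])
  have "ball y (\<eta> * t) \<subseteq> ball x (2 * t)"
  proof
    fix w assume "w \<in> ball y (\<eta> * t)"
    moreover have "\<eta> * t \<le> t"
      using \<eta> t by simp
    ultimately show "w \<in> ball x (2 * t)"
      using t(2) dist_triangle[of x w y] by (simp add: dist_commute)
  qed
  then have "b \<le> mu ((ball y (\<eta> * t) \<inter> B1 \<inter> B2) \<union> ((ball x (2 * t) - B1) \<union> (ball x (2 * t) - B2)))"
    unfolding b_def by (intro mu_mono) blast
  also have "\<dots> \<le> mu (ball y (\<eta> * t) \<inter> B1 \<inter> B2) + (mu (ball x (2 * t) - B1) + mu (ball x (2 * t) - B2))"
    by (intro order_trans[OF mu_subadditive] add_left_mono mu_subadditive)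
  also have "\<dots> \<le> mu (ball y (\<eta> * t) \<inter> B1 \<inter> B2) + (ennreal (1 / 4) * b + ennreal (1 / 4) * b)"
    using B1 B2 quarter by (intro add_left_mono add_mono) auto
  also have "\<dots> = mu (ball y (\<eta> * t) \<inter> B1 \<inter> B2) + ennreal (1 / 2) * b"
    by (simp add: distrib_right[symmetric] ennreal_plus[symmetric])
  finally have "b \<le> mu (ball y (\<eta> * t) \<inter> B1 \<inter> B2) + ennreal (1 / 2) * b" .
  moreover have "0 < b" "b < \<infinity>"
    unfolding b_def by (rule mu_ball_pos[OF \<open>0 < \<eta> * t\<close>], rule mu_ball_finite)
  ultimately show ?thesis
    by (rule ennreal_pos_if_le_plus_half)
qed

lemma density_points_meet_small_balls:
  assumes B1: "density_point x B1" and B2: "density_point x B2" and \<eta>: "0 < \<eta>" "\<eta> \<le> 1"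
  shows "\<forall>\<^sub>F y in at x. 0 < mu (ball y (\<eta> * dist y x) \<inter> B1 \<inter> B2)"
proof -
  obtain m :: nat where "3 / \<eta> < 2 ^ m"
    using real_arch_pow[of 2 "3 / \<eta>"] by auto
  then have m: "3 \<le> 2 ^ m * \<eta>"
    using \<eta>(1) by (simp add: divide_less_eq)
  have "0 < 1 / (4 * K ^ m)"
    using K_pos by simp
  with B1 B2 have "\<forall>\<^sub>F r in at_right 0.
      mu (ball x r - B1) \<le> ennreal (1 / (4 * K ^ m)) * mu (ball x r) \<and>
      mu (ball x r - B2) \<le> ennreal (1 / (4 * K ^ m)) * mu (ball x r)"
    unfolding density_point_def by (simp add: eventually_conj_iff)
  then obtain r0 where "0 < r0" and r0: "\<And>r. 0 < r \<Longrightarrow> r < r0 \<Longrightarrow>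
      mu (ball x r - B1) \<le> ennreal (1 / (4 * K ^ m)) * mu (ball x r) \<and>
      mu (ball x r - B2) \<le> ennreal (1 / (4 * K ^ m)) * mu (ball x r)"
    unfolding eventually_at_right_field by blast
  show ?thesis
    unfolding eventually_at
  proof (intro exI conjI ballI impI)
    fix y assume "y \<noteq> x \<and> dist y x < r0 / 2"
    then show "0 < mu (ball y (\<eta> * dist y x) \<inter> B1 \<inter> B2)"
      using \<eta> m r0[of "2 * dist y x"] by (intro small_ball_meets_sets_of_large_density) auto
  qed (use \<open>0 < r0\<close> in simp)
qed

lemma mu_accumulation_if_mu_nbhd:
  assumes "mu_nbhd mu x C" and "x islimpt UNIV"
  shows "mu_accumulation mu x C"
  unfolding mu_accumulation_def
proof (intro allI impI)
  fix U assume "mu_nbhd mu x U"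
  then obtain BU where BU: "BU \<subseteq> U" "density_point x BU"
    by (auto simp: mu_nbhd_iff)
  obtain BC where BC: "BC \<subseteq> C" "density_point x BC"
    using assms(1) by (auto simp: mu_nbhd_iff)
  obtain d where "0 < d" and d: "\<And>y. y \<noteq> x \<Longrightarrow> dist y x < d \<Longrightarrow>
      0 < mu (ball y (1 / 2 * dist y x) \<inter> BC \<inter> BU)"
    using density_points_meet_small_balls[OF BC(2) BU(2), of "1 / 2"]
    unfolding eventually_at by auto
  obtain y where "y \<noteq> x" "dist y x < d"
    using assms(2) \<open>0 < d\<close> unfolding islimpt_approachable by blast
  with d have "ball y (1 / 2 * dist y x) \<inter> BC \<inter> BU \<noteq> {}"
    by force
  then obtain w where w: "dist y w < dist y x / 2" "w \<in> BC" "w \<in> BU"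
    by auto
  then have "w \<noteq> x"
    using \<open>y \<noteq> x\<close> by (auto simp: dist_commute)
  then show "C \<inter> U - {x} \<noteq> {}"
    using w BC BU by blast
qed

lemma islimpt_if_mu_accumulation:
  assumes "mu_accumulation mu x A"
  shows "x islimpt A"
  unfolding islimpt_approachable
proof (intro allI impI)
  fix e :: real assume "0 < e"
  then have "A \<inter> ball x e - {x} \<noteq> {}"
    using assms mu_nbhd_ball unfolding mu_accumulation_def by blast
  then show "\<exists>y\<in>A. y \<noteq> x \<and> dist y x < e"
    by (auto simp: dist_commute)
qed

lemma Vitali_covering_measure:
  assumes rr: "\<And>x. x \<in> Z \<Longrightarrow> 0 < rr x \<and> rr x \<le> 1"
  obtains C where "countable C" "C \<subseteq> Z" "disjoint_family_on (\<lambda>j. ball j (rr j)) C"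
    "mu Z \<le> (\<integral>\<^sup>+j. ennreal (K ^ 2) * mu (ball j (rr j)) \<partial>count_space C)"
proof -
  obtain C where C: "countable C" "C \<subseteq> Z"
    and disj: "pairwise (\<lambda>i j. disjnt (ball i (rr i)) (ball j (rr j))) C"
    and cover: "\<And>x. x \<in> Z \<Longrightarrow> \<exists>j\<in>C. dist x j < 3 * rr j"
    using Vitali_covering_metric[of Z rr 1 "\<lambda>x. x"] rr by blast
  have "Z \<subseteq> (\<Union>j\<in>C. ball j (2 ^ 2 * rr j))"
  proof
    fix x assume "x \<in> Z"
    then obtain j where "j \<in> C" "dist x j < 3 * rr j"
      using cover by blast
    moreover have "0 < rr j"
      using rr \<open>j \<in> C\<close> C(2) by blast
    ultimately show "x \<in> (\<Union>j\<in>C. ball j (2 ^ 2 * rr j))"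
      by (auto simp: dist_commute intro!: bexI[of _ j])
  qed
  then have "mu Z \<le> emeasure borel_mu (\<Union>j\<in>C. ball j (2 ^ 2 * rr j))"
    by (subst emeasure_borel_mu) (auto intro!: mu_mono borel_open)
  also have "\<dots> \<le> (\<integral>\<^sup>+j. emeasure borel_mu (ball j (2 ^ 2 * rr j)) \<partial>count_space C)"
    using C(1) by (intro emeasure_UN_countable_le) auto
  also have "\<dots> \<le> (\<integral>\<^sup>+j. ennreal (K ^ 2) * mu (ball j (rr j)) \<partial>count_space C)"
  proof (rule nn_integral_mono)
    fix j assume "j \<in> space (count_space C)"
    then have "0 < rr j"
      using rr C(2) by auto
    then show "emeasure borel_mu (ball j (2 ^ 2 * rr j)) \<le> ennreal (K ^ 2) * mu (ball j (rr j))"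
      by (simp only: emeasure_borel_mu[OF borel_open[OF open_ball]] mu_ball_doubling_power)
  qed
  finally show thesis
    using disj C by (intro that) (auto simp: disjoint_family_on_def pairwise_def disjnt_def)
qed

lemma Vitali_density_estimate:
  assumes W: "W \<in> sets borel"
    and rr: "\<And>x. x \<in> Z \<Longrightarrow>
      0 < rr x \<and> rr x \<le> 1 \<and> ennreal s * mu (ball x (rr x)) \<le> mu (ball x (rr x) \<inter> W)"
  shows "ennreal s * mu Z \<le> ennreal (K ^ 2) * mu (W \<inter> (\<Union>x\<in>Z. ball x (rr x)))"
proof -
  obtain C where C: "countable C" "C \<subseteq> Z" "disjoint_family_on (\<lambda>j. ball j (rr j)) C"
    and Z: "mu Z \<le> (\<integral>\<^sup>+j. ennreal (K ^ 2) * mu (ball j (rr j)) \<partial>count_space C)"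
    using Vitali_covering_measure[of Z rr] rr by blast
  from Z have "ennreal s * mu Z \<le>
      ennreal s * (\<integral>\<^sup>+j. ennreal (K ^ 2) * mu (ball j (rr j)) \<partial>count_space C)"
    by (rule mult_left_mono) simp
  also have "\<dots> = ennreal (K ^ 2) * (\<integral>\<^sup>+j. ennreal s * mu (ball j (rr j)) \<partial>count_space C)"
    by (simp add: nn_integral_cmult[symmetric] mult.left_commute)
  also have "\<dots> \<le> ennreal (K ^ 2) * (\<integral>\<^sup>+j. emeasure borel_mu (ball j (rr j) \<inter> W) \<partial>count_space C)"
    using rr C(2) W by (intro mult_left_mono nn_integral_mono) (auto simp: emeasure_borel_mu)
  also have "\<dots> = ennreal (K ^ 2) * emeasure borel_mu (\<Union>j\<in>C. ball j (rr j) \<inter> W)"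
    using C(1,3) W by (subst emeasure_UN_countable) (auto simp: disjoint_family_on_def)
  also have "\<dots> \<le> ennreal (K ^ 2) * mu (W \<inter> (\<Union>x\<in>Z. ball x (rr x)))"
  proof -
    have "(\<Union>j\<in>C. ball j (rr j) \<inter> W) \<in> sets borel"
      using W C(1) by (intro sets.countable_UN') auto
    then show ?thesis
      using C(2) by (subst emeasure_borel_mu) (auto intro!: mult_left_mono mu_mono)
  qed
  finally show ?thesis .
qed

lemma low_density_measure_le:
  assumes H: "H \<in> sets borel" and Z: "Z \<subseteq> H \<inter> ball z R" and "0 < \<delta>"
    and low: "\<And>x. x \<in> Z \<Longrightarrow> \<exists>\<^sub>F r in at_right 0. ennreal s * mu (ball x r) \<le> mu (ball x r - H)"
  shows "ennreal s * mu Z \<le> ennreal (K ^ 2) * ennreal \<delta>"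
proof -
  obtain V where V: "open V" "H \<inter> ball z R \<subseteq> V" "mu (V - H \<inter> ball z R) < ennreal \<delta>"
    using open_superset_small_excess[of "H \<inter> ball z R" z R \<delta>] H \<open>0 < \<delta>\<close> by auto
  have "\<exists>r. 0 < r \<and> r \<le> 1 \<and> ball x r \<subseteq> V \<and> ennreal s * mu (ball x r) \<le> mu (ball x r \<inter> (V - H))"
    if "x \<in> Z" for x
  proof -
    obtain \<epsilon> where "0 < \<epsilon>" "ball x \<epsilon> \<subseteq> V"
      using V(1,2) Z \<open>x \<in> Z\<close> open_contains_ball by blast
    obtain r where r: "0 < r" "r < min 1 \<epsilon>" "ennreal s * mu (ball x r) \<le> mu (ball x r - H)"
      using low[OF \<open>x \<in> Z\<close>] \<open>0 < \<epsilon>\<close>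
      unfolding frequently_def eventually_at_right_field by (metis min_less_iff_conj zero_less_one)
    then have "ball x r \<subseteq> V"
      using \<open>ball x \<epsilon> \<subseteq> V\<close> by (auto simp: subset_ball[THEN subset_trans])
    moreover from this have "ball x r - H = ball x r \<inter> (V - H)"
      by blast
    ultimately show ?thesis
      using r by (intro exI[of _ r]) auto
  qed
  then obtain rr where rr: "\<And>x. x \<in> Z \<Longrightarrow> 0 < rr x \<and> rr x \<le> 1 \<and> ball x (rr x) \<subseteq> V \<and>
      ennreal s * mu (ball x (rr x)) \<le> mu (ball x (rr x) \<inter> (V - H))"
    by (metis (no_types))
  have "ennreal s * mu Z \<le> ennreal (K ^ 2) * mu ((V - H) \<inter> (\<Union>x\<in>Z. ball x (rr x)))"
    using V(1) H rr by (intro Vitali_density_estimate) auto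
  also have "\<dots> \<le> ennreal (K ^ 2) * ennreal \<delta>"
  proof (rule mult_left_mono)
    have "mu ((V - H) \<inter> (\<Union>x\<in>Z. ball x (rr x))) \<le> mu (V - H \<inter> ball z R)"
      by (rule mu_mono) blast
    then show "mu ((V - H) \<inter> (\<Union>x\<in>Z. ball x (rr x))) \<le> ennreal \<delta>"
      using V(3) by simp
  qed simp
  finally show ?thesis .
qed

lemma null_if_frequently_low_density:
  assumes H: "H \<in> sets borel" and "0 < s" and "Z \<subseteq> H"
    and low: "\<And>x. x \<in> Z \<Longrightarrow> \<exists>\<^sub>F r in at_right 0. ennreal s * mu (ball x r) \<le> mu (ball x r - H)"
  shows "mu Z = 0"
proof (cases "Z = {}")
  case False
  then obtain z where "z \<in> Z" by blast
  have "ennreal s * mu (Z \<inter> ball z R) \<le> 0" for R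
  proof (rule ennreal_le_epsilon)
    fix e :: real assume "0 < e"
    then have "ennreal s * mu (Z \<inter> ball z R) \<le> ennreal (K ^ 2) * ennreal (e / K ^ 2)"
      using H \<open>Z \<subseteq> H\<close> low K_pos by (intro low_density_measure_le) auto
    also have "\<dots> = ennreal e"
      using K_pos \<open>0 < e\<close> by (simp add: ennreal_mult[symmetric])
    finally show "ennreal s * mu (Z \<inter> ball z R) \<le> 0 + ennreal e"
      by simp
  qed
  then have bounded_part_null: "mu (Z \<inter> ball z R) = 0" for R
    using \<open>0 < s\<close> by simp
  have "Z \<subseteq> (\<Union>R::nat. Z \<inter> ball z (real R))"
  proof
    fix x assume "x \<in> Z"
    moreover obtain R :: nat where "dist z x < R"
      using reals_Archimedean2 by blast
    ultimately show "x \<in> (\<Union>R::nat. Z \<inter> ball z (real R))"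
      by auto
  qed
  then show ?thesis
    by (rule null_subset[OF null_UN[OF bounded_part_null]])
qed simp

lemma density_point_ae:
  assumes "H \<in> sets borel"
  shows "mu {x \<in> H. \<not> density_point x H} = 0"
proof -
  let ?low = "\<lambda>m x. \<exists>\<^sub>F r in at_right 0. ennreal (1 / Suc m) * mu (ball x r) \<le> mu (ball x r - H)"
  have cover: "{x \<in> H. \<not> density_point x H} \<subseteq> (\<Union>m. {x \<in> H. ?low m x})"
  proof safe
    fix x assume "x \<in> H" "\<not> density_point x H"
    then obtain e where "0 < e"
      and "\<not> (\<forall>\<^sub>F r in at_right 0. mu (ball x r - H) \<le> ennreal e * mu (ball x r))"
      unfolding density_point_def by blast
    then have e: "\<exists>\<^sub>F r in at_right 0. \<not> mu (ball x r - H) \<le> ennreal e * mu (ball x r)"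
      by (simp add: not_eventually)
    obtain m where "inverse (Suc m) < e"
      using reals_Archimedean[OF \<open>0 < e\<close>] by blast
    then have m: "1 / Suc m < e"
      by (simp add: inverse_eq_divide)
    have "?low m x"
      using e
    proof (rule frequently_elim1)
      fix r assume "\<not> mu (ball x r - H) \<le> ennreal e * mu (ball x r)"
      moreover have "ennreal (1 / Suc m) * mu (ball x r) \<le> ennreal e * mu (ball x r)"
        using m by (intro mult_right_mono ennreal_leI) auto
      ultimately show "ennreal (1 / Suc m) * mu (ball x r) \<le> mu (ball x r - H)"
        by simp
    qed
    then show "x \<in> (\<Union>m. {x \<in> H. ?low m x})"
      using \<open>x \<in> H\<close> by blast
  qed
  have null: "mu {x \<in> H. ?low m x} = 0" for m
    using assms by (rule null_if_frequently_low_density) auto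
  show ?thesis
    by (rule null_subset[OF null_UN[OF null] cover])
qed

lemma mu_nbhd_ae: "H \<in> sets borel \<Longrightarrow> mu {x \<in> H. \<not> mu_nbhd mu x H} = 0"
  by (rule null_subset[OF density_point_ae]) (auto simp: mu_nbhd_iff)

text \<open>
  \<open>P\<close> need not be measurable; a hull \<open>H\<close> lets density arguments for the Borel set \<open>H\<close> produce
  points of \<open>P\<close> itself (\<open>measurable_hull_meets\<close>).
\<close>

definition measurable_hull :: "'a set \<Rightarrow> 'a set \<Rightarrow> bool" where
  "measurable_hull P H \<longleftrightarrow>
     H \<in> sets borel \<and> P \<subseteq> H \<and> (\<forall>S\<in>sets borel. P \<inter> S = {} \<longrightarrow> mu (H \<inter> S) = 0)"

lemma measurable_hull_exists:
  assumes "mu P < \<infinity>"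
  obtains H where "measurable_hull P H"
proof -
  obtain H where H: "H \<in> sets borel" "P \<subseteq> H" "mu H = mu P"
    using borel_superset_same_measure by blast
  have "mu (H \<inter> S) = 0" if S: "S \<in> sets borel" "P \<inter> S = {}" for S
  proof -
    have "mu P + mu (H \<inter> S) \<le> mu (H - S) + mu (H \<inter> S)"
      using S H(2) by (intro add_right_mono mu_mono) blast
    also have "\<dots> = mu P + 0"
      using mu_split_borel[OF S(1), of H] H(3) by (simp add: add.commute)
    finally show ?thesis
      using assms by (auto simp: ennreal_add_left_cancel_le)
  qed
  with H have "measurable_hull P H"
    by (simp add: measurable_hull_def)
  then show thesis
    by (rule that)
qed

lemma measurable_hull_meets:
  assumes "measurable_hull P H" "S \<in> sets borel" "S \<subseteq> H" "0 < mu S"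
  shows "P \<inter> S \<noteq> {}"
  using assms unfolding measurable_hull_def by (metis Int_absorb1 less_irrefl)

lemma hull_points_near_density_point:
  assumes hull: "measurable_hull P H" and "mu_nbhd mu x H"
    and BU: "BU \<in> sets borel" "density_point x BU" and \<eta>: "0 < \<eta>" "\<eta> \<le> 1"
  shows "\<forall>\<^sub>F y in at x. \<exists>z\<in>P \<inter> BU. dist y z < \<eta> * dist y x"
proof -
  obtain BH where BH: "BH \<in> sets borel" "BH \<subseteq> H" "density_point x BH"
    using assms(2) by (auto simp: mu_nbhd_iff)
  from density_points_meet_small_balls[OF BU(2) BH(3) \<eta>]
  show ?thesis
  proof eventually_elim
    case (elim y)
    then have "P \<inter> (ball y (\<eta> * dist y x) \<inter> BU \<inter> BH) \<noteq> {}"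
      using BU(1) BH(1,2) by (intro measurable_hull_meets[OF hull]) auto
    then show ?case
      by auto
  qed
qed


lemma eventually_nearby_approximating_point:
  assumes hull: "measurable_hull P H" "mu_nbhd mu x H" and "P \<subseteq> C"
    and approx: "mu_tendsto mu x C h 0" and "0 < e" and \<eta>: "0 < \<eta>" "\<eta> \<le> 1"
  shows "\<forall>\<^sub>F y in at x. \<exists>z\<in>P. z \<noteq> x \<and> dist y z < \<eta> * dist y x \<and> \<bar>h z\<bar> < e"
proof -
  obtain U where U: "mu_nbhd mu x U" "\<And>z. z \<in> U \<inter> C - {x} \<Longrightarrow> dist (h z) 0 < e"
    using approx \<open>0 < e\<close> unfolding mu_tendsto_def by blast
  then obtain BU where BU: "BU \<in> sets borel" "BU \<subseteq> U" "density_point x BU"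
    by (auto simp: mu_nbhd_iff)
  from hull_points_near_density_point[OF hull BU(1,3) \<eta>]
  show ?thesis
  proof eventually_elim
    case (elim y)
    then obtain z where z: "z \<in> P" "z \<in> BU" "dist y z < \<eta> * dist y x"
      by blast
    moreover have "z \<noteq> x"
      using z(3) \<eta> mult_left_le_one_le[of "dist y x" \<eta>] by auto
    ultimately show ?case
      using U(2)[of z] BU(2) \<open>P \<subseteq> C\<close> by auto
  qed
qed

end

section \<open>Extension from closed sets\<close>

lemma lip_points_if_pointwise_lipschitz:
  assumes "x islimpt UNIV" and "\<And>y. dist (f y) (f x) \<le> M * dist y x"
  shows "x \<in> lip_points UNIV f"
proof -
  have "Limsup (at x) (\<lambda>y. ereal (dist (f y) (f x) / dist y x)) \<le> ereal M"
  proof (rule Limsup_bounded)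
    have "ereal (dist (f y) (f x) / dist y x) \<le> ereal M" if "y \<noteq> x" for y
      using assms(2)[of y] that by (simp add: divide_le_eq)
    then show "\<forall>\<^sub>F y in at x. ereal (dist (f y) (f x) / dist y x) \<le> ereal M"
      by (auto simp: eventually_at_filter)
  qed
  then show ?thesis
    using assms(1) by (auto simp: lip_points_def)
qed

lemma almost_nearest_point:
  assumes "closed C" "C \<noteq> {}" "y \<notin> C"
  shows "\<exists>c\<in>C. dist y c \<le> 2 * infdist y C"
proof -
  have "(INF c\<in>C. dist y c) < 2 * infdist y C"
    using infdist_pos_not_in_closed[OF assms] assms(2) by (simp add: infdist_def)
  then show ?thesis
    using assms(2) by (auto simp: cINF_less_iff intro: less_imp_le)
qed

lemma lipschitz_extension_from_closed:
  fixes g :: "'a::metric_space \<Rightarrow> 'b::metric_space"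
  assumes C: "closed C" "C \<noteq> {}" and g: "L-lipschitz_on C g"
  obtains f where "\<And>x. x \<in> C \<Longrightarrow> f x = g x" "\<And>x y. x \<in> C \<Longrightarrow> dist (f y) (f x) \<le> 3 * L * dist y x"
proof -
  have "\<forall>y. \<exists>c. y \<notin> C \<longrightarrow> c \<in> C \<and> dist y c \<le> 2 * infdist y C"
    using almost_nearest_point[OF C] by blast
  from choice[OF this] obtain near
    where near: "\<forall>y. y \<notin> C \<longrightarrow> near y \<in> C \<and> dist y (near y) \<le> 2 * infdist y C"
    by blast
  define f where "f y = (if y \<in> C then g y else g (near y))" for y
  show thesis
  proof
    show "f x = g x" if "x \<in> C" for x
      using that by (simp add: f_def)
    fix x y assume x: "x \<in> C"
    have "0 \<le> L" using g by (rule lipschitz_on_nonneg)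
    show "dist (f y) (f x) \<le> 3 * L * dist y x"
    proof (cases "y \<in> C")
      case True
      have "dist (g y) (g x) \<le> L * dist y x"
        by (rule lipschitz_onD[OF g True x])
      also have "\<dots> \<le> 3 * L * dist y x"
        using \<open>0 \<le> L\<close> by (intro mult_right_mono) auto
      finally show ?thesis
        using True x by (simp add: f_def)
    next
      case False
      have "dist (near y) x \<le> dist (near y) y + dist y x"
        by (rule dist_triangle)
      also have "\<dots> \<le> 3 * dist y x"
        using near[rule_format, OF False] infdist_le[OF x, of y] by (simp add: dist_commute)
      finally have "dist (f y) (f x) \<le> L * (3 * dist y x)"
        using lipschitz_onD[OF g _ x, of "near y"] near[rule_format, OF False] \<open>0 \<le> L\<close> False x
        by (simp add: f_def) (meson mult_left_mono order_trans)
      then show ?thesis by simp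
    qed
  qed
qed

section \<open>Approximate differentials at density points\<close>

definition lip_points_at_scale ::
  "'a::metric_space set \<Rightarrow> ('a \<Rightarrow> 'b::metric_space) \<Rightarrow> real \<Rightarrow> real \<Rightarrow> 'a set" where
  "lip_points_at_scale A f L d = {z \<in> A. \<forall>y\<in>A. dist y z < d \<longrightarrow> dist (f y) (f z) \<le> L * dist y z}"

lemma lip_points_subset_scales:
  "lip_points A f \<subseteq> (\<Union>n. lip_points_at_scale A f (Suc n) (1 / Suc n))"
proof
  fix x assume "x \<in> lip_points A f"
  then have "x \<in> A" and "Limsup (at x within A) (\<lambda>y. ereal (dist (f y) (f x) / dist y x)) \<noteq> \<infinity>"
    by (auto simp: lip_points_def)
  then obtain n0 :: nat where "Limsup (at x within A) (\<lambda>y. ereal (dist (f y) (f x) / dist y x)) < n0"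
    by (auto simp: less_PInf_Ex_of_nat)
  then have "\<forall>\<^sub>F y in at x within A. ereal (dist (f y) (f x) / dist y x) < n0"
    by (rule Limsup_lessD)
  then obtain \<delta> where "0 < \<delta>" and \<delta>: "\<And>y. y \<in> A \<Longrightarrow> y \<noteq> x \<Longrightarrow> dist y x < \<delta> \<Longrightarrow>
      dist (f y) (f x) / dist y x < n0"
    unfolding eventually_at by auto
  obtain N :: nat where N: "inverse (Suc N) < \<delta>"
    using reals_Archimedean[OF \<open>0 < \<delta>\<close>] by blast
  define n where "n = max n0 N"
  have "x \<in> lip_points_at_scale A f (Suc n) (1 / Suc n)"
    unfolding lip_points_at_scale_def
  proof (intro CollectI conjI ballI impI)
    fix y assume y: "y \<in> A" "dist y x < 1 / Suc n"
    show "dist (f y) (f x) \<le> Suc n * dist y x"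
    proof (cases "y = x")
      case False
      have "1 / Suc n \<le> 1 / Suc N"
        by (simp add: n_def frac_le)
      then have "dist y x < \<delta>"
        using y(2) N by (simp add: inverse_eq_divide)
      then have "dist (f y) (f x) < n0 * dist y x"
        using \<delta>[OF y(1) False] False by (simp add: divide_less_eq)
      also have "\<dots> \<le> Suc n * dist y x"
        by (intro mult_right_mono) (auto simp: n_def)
      finally show ?thesis by simp
    qed simp
  qed (rule \<open>x \<in> A\<close>)
  then show "x \<in> (\<Union>n. lip_points_at_scale A f (Suc n) (1 / Suc n))"
    by blast
qed

lemma lipschitz_on_if_lip_points_at_scale:
  assumes "P \<subseteq> lip_points_at_scale A f L d" "P \<subseteq> ball c (d / 2)" "0 \<le> L"
  shows "L-lipschitz_on P f"
proof (rule lipschitz_onI)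
  fix x y assume "x \<in> P" "y \<in> P"
  moreover have "dist c x < d / 2" "dist c y < d / 2"
    using assms(2) \<open>x \<in> P\<close> \<open>y \<in> P\<close> by auto
  ultimately have "dist x y < d"
    using dist_triangle[of x y c] by (simp add: dist_commute)
  then show "dist (f x) (f y) \<le> L * dist x y"
    using assms(1) \<open>x \<in> P\<close> \<open>y \<in> P\<close> by (auto simp: lip_points_at_scale_def)
qed (rule assms(3))

lemma dist_le_via_nearby_point:
  fixes f F :: "'a::metric_space \<Rightarrow> 'b::metric_space"
  assumes "dist (f y) (f z) \<le> L * dist y z" "dist (F z) (F y) \<le> LF * dist z y"
    and "dist (f z) (F z) \<le> e * dist z x" and "dist y z \<le> \<eta> * dist y x"
    and "0 \<le> L" "0 \<le> LF" "0 \<le> e"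
  shows "dist (f y) (F y) \<le> ((L + LF) * \<eta> + e * (1 + \<eta>)) * dist y x"
proof -
  have "dist z x \<le> (1 + \<eta>) * dist y x"
    using dist_triangle[of z x y] assms(4) by (simp add: dist_commute algebra_simps)
  then have "dist (f z) (F z) \<le> e * ((1 + \<eta>) * dist y x)"
    using assms(3,7) by (meson mult_left_mono order_trans)
  moreover have "dist (f y) (f z) \<le> L * (\<eta> * dist y x)" "dist (F z) (F y) \<le> LF * (\<eta> * dist y x)"
    using assms(1,2,4,5,6) by (auto simp: dist_commute intro: order_trans mult_left_mono)
  moreover have "dist (f y) (F y) \<le> dist (f y) (f z) + dist (f z) (F z) + dist (F z) (F y)"
    using dist_triangle[of "f y" "F y" "f z"] dist_triangle[of "f z" "F y" "F z"] by simp
  ultimately show ?thesis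
    by (simp add: algebra_simps)
qed

lemma dist_le_via_nearby_lip_point:
  assumes z: "z \<in> lip_points_at_scale A f L d" and "y \<in> A"
    and LF: "LF-lipschitz_on (ball x \<delta>) F"
    and y_close: "dist y x < min d \<delta> / 2" and yz: "dist y z \<le> \<eta> * dist y x" "\<eta> \<le> 1 / 2"
    and z_approx: "dist (f z) (F z) \<le> e * dist z x" and "0 \<le> L" "0 \<le> e"
  shows "dist (f y) (F y) \<le> ((L + LF) * \<eta> + e * (1 + \<eta>)) * dist y x"
proof (rule dist_le_via_nearby_point[where z = z])
  have "\<eta> * dist y x \<le> dist y x / 2"
    using yz(2) by (metis mult_right_mono zero_le_dist times_divide_eq_left mult_1)
  then have "dist y z \<le> dist y x / 2"
    using yz(1) by linarith
  moreover have "dist y x < d / 2" "dist y x < \<delta> / 2"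
    using y_close by simp_all
  moreover have "dist z x \<le> dist y z + dist y x"
    using dist_triangle[of z x y] by (simp add: dist_commute)
  ultimately have "dist y z < d" "dist y x < \<delta>" "dist z x < \<delta>"
    using zero_le_dist[of y z] zero_le_dist[of y x] by linarith+
  then show "dist (f y) (f z) \<le> L * dist y z" "dist (F z) (F y) \<le> LF * dist z y"
    using z \<open>y \<in> A\<close> lipschitz_onD[OF LF, of z y]
    by (auto simp: lip_points_at_scale_def dist_commute)
qed (use z_approx yz(1) \<open>0 \<le> L\<close> lipschitz_on_nonneg[OF LF] \<open>0 \<le> e\<close> in auto)

lemma X_distribution_representative:
  assumes "X_distribution D" "(x, P, c) \<in> D" "(B, F) \<in> c"
  obtains \<delta> LF where "0 < \<delta>" "ball x \<delta> \<subseteq> B" "LF-lipschitz_on B F"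
proof -
  have "c \<in> germ_classes x P"
    using assms(1,2) unfolding X_distribution_def by fast
  then have "lip_rep x P (B, F)"
    using assms(3) unfolding germ_classes_def by blast
  then obtain U LF where "open U" "x \<in> U" "U \<subseteq> B" "LF-lipschitz_on B F"
    unfolding lip_rep_def by auto
  moreover from \<open>open U\<close> \<open>x \<in> U\<close> obtain \<delta> where "0 < \<delta>" "ball x \<delta> \<subseteq> U"
    by (rule openE)
  ultimately show thesis
    using that by blast
qed

lemma small_constants_exist:
  fixes M \<epsilon> :: real
  assumes "0 < \<epsilon>" "0 \<le> M"
  obtains \<eta> e where "0 < \<eta>" "\<eta> \<le> 1 / 2" "0 < e" "M * \<eta> + e * (1 + \<eta>) < \<epsilon>"
proof
  define \<eta> where "\<eta> = min (1 / 2) (\<epsilon> / (4 * (M + 1)))"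
  show "\<eta> \<le> 1 / 2"
    unfolding \<eta>_def by (rule min.cobounded1)
  show "0 < \<eta>" "0 < \<epsilon> / 4"
    using assms by (auto simp: \<eta>_def)
  have "M * \<eta> \<le> (M + 1) * (\<epsilon> / (4 * (M + 1)))"
    using assms \<open>0 < \<eta>\<close> by (intro mult_mono) (auto simp: \<eta>_def)
  also have "\<dots> = \<epsilon> / 4"
    using assms by (simp add: field_simps)
  finally have "M * \<eta> \<le> \<epsilon> / 4" .
  moreover have "\<epsilon> / 4 * (1 + \<eta>) \<le> \<epsilon> / 4 * (3 / 2)"
    using assms \<open>\<eta> \<le> 1 / 2\<close> by (intro mult_left_mono) auto
  ultimately show "M * \<eta> + \<epsilon> / 4 * (1 + \<eta>) < \<epsilon>"
    using assms by linarith
qed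

context doubling_space
begin

text \<open>
  Each \<open>y\<close> near \<open>x\<close> is compared with a point \<open>z\<close> of \<open>P\<close> close to \<open>y\<close> at which the approximate
  estimate holds; the Lipschitz bounds of \<open>f\<close> at \<open>z\<close> and of \<open>F\<close> transfer it to \<open>y\<close>.
\<close>

lemma first_order_limit_if_approx:
  assumes P: "P \<subseteq> lip_points_at_scale A f L d" "P \<subseteq> C" "0 \<le> L" "0 < d"
    and gf: "\<And>z. z \<in> P \<Longrightarrow> g z = f z"
    and hull: "measurable_hull P H" "mu_nbhd mu x H"
    and LF: "LF-lipschitz_on (ball x \<delta>) F" "0 < \<delta>"
    and approx_lim: "mu_tendsto mu x C (\<lambda>y. dist (g y) (F y) / dist y x) 0"
  shows "((\<lambda>y. dist (f y) (F y) / dist y x) \<longlongrightarrow> 0) (at x within A)"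
proof (rule tendstoI)
  fix \<epsilon> :: real assume "0 < \<epsilon>"
  obtain \<eta> e where \<eta>: "0 < \<eta>" "\<eta> \<le> 1 / 2" and "0 < e" and small: "(L + LF) * \<eta> + e * (1 + \<eta>) < \<epsilon>"
    using small_constants_exist[OF \<open>0 < \<epsilon>\<close>, of "L + LF"] P(3) lipschitz_on_nonneg[OF LF(1)] by auto
  have "\<forall>\<^sub>F y in at x. \<exists>z\<in>P. z \<noteq> x \<and> dist y z < \<eta> * dist y x \<and> \<bar>dist (g z) (F z) / dist z x\<bar> < e"
    using \<eta> \<open>0 < e\<close> by (intro eventually_nearby_approximating_point[OF hull P(2) approx_lim]) auto
  moreover have "\<forall>\<^sub>F y in at x. dist y x < min d \<delta> / 2"
    using P(4) LF(2) by (auto simp: eventually_at intro!: exI[of _ "min d \<delta> / 2"])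
  ultimately have "\<forall>\<^sub>F y in at x. (\<exists>z\<in>P. z \<noteq> x \<and> dist y z < \<eta> * dist y x \<and>
      \<bar>dist (g z) (F z) / dist z x\<bar> < e) \<and> dist y x < min d \<delta> / 2"
    by (rule eventually_conj)
  then obtain r where "0 < r" and r: "\<And>y. y \<noteq> x \<Longrightarrow> dist y x < r \<Longrightarrow>
      (\<exists>z\<in>P. z \<noteq> x \<and> dist y z < \<eta> * dist y x \<and> \<bar>dist (g z) (F z) / dist z x\<bar> < e) \<and>
      dist y x < min d \<delta> / 2"
    unfolding eventually_at by auto
  show "\<forall>\<^sub>F y in at x within A. dist (dist (f y) (F y) / dist y x) 0 < \<epsilon>"
    unfolding eventually_at
  proof (intro exI[of _ r] conjI ballI impI)
    fix y assume "y \<in> A" and y: "y \<noteq> x \<and> dist y x < r"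
    then obtain z where z: "z \<in> P" "z \<noteq> x" "dist y z < \<eta> * dist y x"
      and "\<bar>dist (g z) (F z) / dist z x\<bar> < e" and y_close: "dist y x < min d \<delta> / 2"
      using r by blast
    then have "dist (f z) (F z) \<le> e * dist z x"
      using gf[OF z(1)] by (simp add: divide_less_eq)
    with z P(1) \<open>y \<in> A\<close> LF(1) y_close \<eta>(2) P(3) \<open>0 < e\<close>
    have "dist (f y) (F y) \<le> ((L + LF) * \<eta> + e * (1 + \<eta>)) * dist y x"
      by (intro dist_le_via_nearby_lip_point[where z = z]) auto
    also have "\<dots> < \<epsilon> * dist y x"
      using small y by simp
    finally show "dist (dist (f y) (F y) / dist y x) 0 < \<epsilon>"
      using y by (simp add: divide_less_eq)
  qed (rule \<open>0 < r\<close>)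
qed

lemma D_differentiable_at_if_approx_D_differentiable_at:
  fixes D :: "('a \<times> 'b::metric_space \<times> ('a set \<times> ('a \<Rightarrow> 'b)) set) set"
  assumes D: "X_distribution D"
    and P: "P \<subseteq> lip_points_at_scale A f L d" "P \<subseteq> C" "0 \<le> L" "0 < d"
    and gf: "\<And>z. z \<in> P \<Longrightarrow> g z = f z"
    and hull: "measurable_hull P H" "mu_nbhd mu x H"
    and x: "x \<in> P" "x islimpt A"
    and approx: "approx_D_differentiable_at mu D C g x"
  shows "D_differentiable_at D A f x"
proof -
  obtain c B F where c: "(x, g x, c) \<in> D" "(B, F) \<in> c"
    and approx_lim: "mu_tendsto mu x C (\<lambda>y. dist (g y) (F y) / dist y x) 0"
    using approx unfolding approx_D_differentiable_at_def by blast
  obtain \<delta> LF where "0 < \<delta>" "ball x \<delta> \<subseteq> B" and "LF-lipschitz_on B F"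
    by (rule X_distribution_representative[OF D c])
  then have "LF-lipschitz_on (ball x \<delta>) F"
    using lipschitz_on_subset by blast
  from first_order_limit_if_approx[OF P gf hull this \<open>0 < \<delta>\<close> approx_lim]
  show ?thesis
    using x P(1) c gf[OF x(1)] unfolding D_differentiable_at_def lip_points_at_scale_def by auto
qed

lemma approx_lip_points_if_lipschitz:
  assumes "L-lipschitz_on C g" "x \<in> C" "mu_accumulation mu x C"
  shows "x \<in> approx_lip_points mu C g"
proof -
  have "mu_limsup mu x C (\<lambda>y. dist (g y) (g x) / dist y x) \<le> ereal L"
    unfolding mu_limsup_def
  proof (rule INF_lower2)
    show "UNIV \<in> {U. mu_nbhd mu x U}"
      by (simp add: mu_nbhd_UNIV)
    show "(SUP y\<in>UNIV \<inter> C - {x}. ereal (dist (g y) (g x) / dist y x)) \<le> ereal L"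
    proof (rule SUP_least)
      fix y assume "y \<in> UNIV \<inter> C - {x}"
      then show "ereal (dist (g y) (g x) / dist y x) \<le> ereal L"
        using lipschitz_onD[OF assms(1), of y x] assms(2) by (simp add: divide_le_eq)
    qed
  qed
  then show ?thesis
    using assms(2,3) by (auto simp: approx_lip_points_def)
qed

lemma approx_D_differentiable_ae_at_limit_points:
  assumes ae: "ae_approx_D_differentiable mu D C g" and "closed C" and g: "L-lipschitz_on C g"
  shows "mu {x \<in> C. x islimpt UNIV \<and> \<not> approx_D_differentiable_at mu D C g x} = 0"
proof -
  define G where "G = {x \<in> C. x islimpt UNIV \<and> mu_nbhd mu x C}"
  have G_eq: "G = (C \<inter> {x. x islimpt UNIV}) - {x \<in> C. \<not> mu_nbhd mu x C}"
    by (auto simp: G_def)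
  have "C \<inter> {x. x islimpt UNIV} \<in> sets borel"
    using \<open>closed C\<close> closed_limpts[of UNIV] by (intro sets.Int borel_closed)
  then have "mu_measurable mu G"
    unfolding G_eq using \<open>closed C\<close>
    by (intro mu_measurable_Diff_null mu_measurable_borel mu_nbhd_ae) (simp_all add: borel_closed)
  moreover have "G \<subseteq> approx_lip_points mu C g"
    using g mu_accumulation_if_mu_nbhd by (auto simp: G_def intro: approx_lip_points_if_lipschitz)
  ultimately have "mu {x \<in> G. \<not> approx_D_differentiable_at mu D C g x} = 0"
    using ae unfolding ae_approx_D_differentiable_def by blast
  moreover have "mu {x \<in> C. \<not> mu_nbhd mu x C} = 0"
    using \<open>closed C\<close> by (intro mu_nbhd_ae borel_closed)
  ultimately have "mu ({x \<in> C. \<not> mu_nbhd mu x C} \<union> {x \<in> G. \<not> approx_D_differentiable_at mu D C g x}) = 0"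
    by (rule null_Un[rotated])
  then show ?thesis
    by (rule null_subset) (auto simp: G_def)
qed

lemma ae_D_differentiable_on_piece:
  fixes D :: "('a \<times> 'b::complete_space \<times> ('a set \<times> ('a \<Rightarrow> 'b)) set) set"
  assumes complete: "differentiably_complete mu D" and D: "X_distribution D"
    and P: "P \<subseteq> lip_points_at_scale A f L d" "P \<subseteq> ball c (d / 2)" "0 \<le> L" "0 < d"
  shows "mu {x \<in> P. x islimpt A \<and> \<not> D_differentiable_at D A f x} = 0"
proof (cases "P = {}")
  case False
  obtain g where g: "L-lipschitz_on (closure P) g" "\<And>z. z \<in> P \<Longrightarrow> g z = f z"
    using lipschitz_extend_closure[OF lipschitz_on_if_lip_points_at_scale[OF P(1-3)]] by blast
  have "ae_approx_D_differentiable mu D (closure P) g"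
    using complete g(1) False unfolding differentiably_complete_def by blast
  then have N_approx: "mu {x \<in> closure P. x islimpt UNIV \<and>
      \<not> approx_D_differentiable_at mu D (closure P) g x} = 0"
    using g(1) by (intro approx_D_differentiable_ae_at_limit_points) auto
  have "mu P < \<infinity>"
    using mu_mono[OF P(2)] mu_ball_finite le_less_trans by blast
  then obtain H where H: "measurable_hull P H"
    by (rule measurable_hull_exists)
  then have N_H: "mu {x \<in> H. \<not> mu_nbhd mu x H} = 0"
    by (intro mu_nbhd_ae) (simp add: measurable_hull_def)
  have "{x \<in> P. x islimpt A \<and> \<not> D_differentiable_at D A f x} \<subseteq>
      {x \<in> closure P. x islimpt UNIV \<and> \<not> approx_D_differentiable_at mu D (closure P) g x} \<union>
      {x \<in> H. \<not> mu_nbhd mu x H}"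
  proof
    fix x assume x: "x \<in> {x \<in> P. x islimpt A \<and> \<not> D_differentiable_at D A f x}"
    then have "x \<in> closure P" "x islimpt UNIV" "x \<in> H"
      using islimpt_subset[of x A UNIV] closure_subset H by (auto simp: measurable_hull_def)
    moreover have "\<not> (mu_nbhd mu x H \<and> approx_D_differentiable_at mu D (closure P) g x)"
    proof
      assume "mu_nbhd mu x H \<and> approx_D_differentiable_at mu D (closure P) g x"
      with x have "D_differentiable_at D A f x"
        by (intro D_differentiable_at_if_approx_D_differentiable_at[OF D P(1) closure_subset P(3,4) g(2) H]) auto
      with x show False by blast
    qed
    ultimately show "x \<in> {x \<in> closure P. x islimpt UNIV \<and> \<not> approx_D_differentiable_at mu D (closure P) g x} \<union>
        {x \<in> H. \<not> mu_nbhd mu x H}"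
      by blast
  qed
  then show ?thesis
    by (rule null_subset[OF null_Un[OF N_approx N_H]])
qed simp

lemma ae_D_differentiable_if_differentiably_complete:
  fixes D :: "('a \<times> 'b::complete_space \<times> ('a set \<times> ('a \<Rightarrow> 'b)) set) set" and f :: "'a \<Rightarrow> 'b"
  assumes "differentiably_complete mu D" "X_distribution D"
  shows "ae_D_differentiable mu D A f"
  unfolding ae_D_differentiable_def
proof (intro allI impI)
  fix B assume B: "mu_measurable mu B \<and> B \<subseteq> lip_points A f"
  obtain Q :: "'a set" where Q: "countable Q" "\<And>X. open X \<Longrightarrow> X \<noteq> {} \<Longrightarrow> \<exists>q\<in>Q. q \<in> X"
    using countable_dense_setE by blast
  define P where "P n k = lip_points_at_scale A f (Suc n) (1 / Suc n) \<inter>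
      ball (from_nat_into Q k) ((1 / Suc n) / 2)" for n k :: nat
  have null: "mu {x \<in> P n k. x islimpt A \<and> \<not> D_differentiable_at D A f x} = 0" for n k
    using assms
    by (intro ae_D_differentiable_on_piece[where L = "Suc n" and d = "1 / Suc n" and c = "from_nat_into Q k"])
      (auto simp: P_def)
  have "{x \<in> B. \<not> D_differentiable_at D A f x} \<subseteq>
      (\<Union>n. \<Union>k. {x \<in> P n k. x islimpt A \<and> \<not> D_differentiable_at D A f x})"
  proof safe
    fix x assume x: "x \<in> B" "\<not> D_differentiable_at D A f x"
    then have "x islimpt A" and "x \<in> lip_points A f"
      using B by (auto simp: lip_points_def)
    then obtain n where n: "x \<in> lip_points_at_scale A f (Suc n) (1 / Suc n)"
      using lip_points_subset_scales by blast
    obtain q where "q \<in> Q" "dist x q < (1 / Suc n) / 2"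
      using Q(2)[of "ball x ((1 / Suc n) / 2)"] by auto
    then have "x \<in> P n (to_nat_on Q q)"
      using n Q(1) by (simp add: P_def dist_commute)
    with \<open>x islimpt A\<close> x(2)
    show "x \<in> (\<Union>n. \<Union>k. {x \<in> P n k. x islimpt A \<and> \<not> D_differentiable_at D A f x})"
      by blast
  qed
  then show "mu {x \<in> B. \<not> D_differentiable_at D A f x} = 0"
    by (rule null_subset[OF null_UN[OF null_UN[OF null]]])
qed

lemma approx_D_differentiable_at_if_D_differentiable_at:
  assumes "D_differentiable_at D UNIV f x" "x \<in> C" "mu_accumulation mu x C"
    and "\<And>y. y \<in> C \<Longrightarrow> f y = g y"
  shows "approx_D_differentiable_at mu D C g x"
proof -
  obtain c B F where c: "(x, f x, c) \<in> D" "(B, F) \<in> c"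
    and lim: "((\<lambda>y. dist (f y) (F y) / dist y x) \<longlongrightarrow> 0) (at x)"
    using assms(1) unfolding D_differentiable_at_def by blast
  have "mu_tendsto mu x C (\<lambda>y. dist (g y) (F y) / dist y x) 0"
    unfolding mu_tendsto_def
  proof (intro allI impI)
    fix e :: real assume "0 < e"
    with lim obtain r where "0 < r"
      and r: "\<And>y. y \<noteq> x \<Longrightarrow> dist y x < r \<Longrightarrow> dist (dist (f y) (F y) / dist y x) 0 < e"
      unfolding tendsto_iff eventually_at by auto
    show "\<exists>U. mu_nbhd mu x U \<and> (\<forall>y\<in>U \<inter> C - {x}. dist (dist (g y) (F y) / dist y x) 0 < e)"
    proof (intro exI[of _ "ball x r"] conjI ballI)
      show "mu_nbhd mu x (ball x r)"
        by (rule mu_nbhd_ball[OF \<open>0 < r\<close>])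
      fix y assume "y \<in> ball x r \<inter> C - {x}"
      then show "dist (dist (g y) (F y) / dist y x) 0 < e"
        using r[of y] assms(4)[of y] by (auto simp: dist_commute)
    qed
  qed
  then show ?thesis
    using assms(2-4) c unfolding approx_D_differentiable_at_def by auto
qed

lemma differentiably_complete_if_ae_D_differentiable:
  fixes D :: "('a \<times> 'b::metric_space \<times> ('a set \<times> ('a \<Rightarrow> 'b)) set) set"
  assumes ae: "\<forall>f :: 'a \<Rightarrow> 'b. ae_D_differentiable mu D UNIV f"
  shows "differentiably_complete mu D"
  unfolding differentiably_complete_def
proof (intro allI impI)
  fix C and g :: "'a \<Rightarrow> 'b"
  assume "closed C \<and> C \<noteq> {} \<and> (\<exists>L. L-lipschitz_on C g)"
  then obtain L where C: "closed C" "C \<noteq> {}" and g: "L-lipschitz_on C g"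
    by blast
  obtain f where fg: "\<And>x. x \<in> C \<Longrightarrow> f x = g x"
    and f: "\<And>x y. x \<in> C \<Longrightarrow> dist (f y) (f x) \<le> 3 * L * dist y x"
    using lipschitz_extension_from_closed[OF C g] by blast
  show "ae_approx_D_differentiable mu D C g"
    unfolding ae_approx_D_differentiable_def
  proof (intro allI impI)
    fix B assume B: "mu_measurable mu B \<and> B \<subseteq> approx_lip_points mu C g"
    then have acc: "\<And>x. x \<in> B \<Longrightarrow> x \<in> C \<and> mu_accumulation mu x C"
      by (auto simp: approx_lip_points_def)
    have "B \<subseteq> lip_points UNIV f"
    proof
      fix x assume "x \<in> B"
      then have "x islimpt UNIV"
        using acc islimpt_if_mu_accumulation islimpt_subset by blast
      then show "x \<in> lip_points UNIV f"
        using f acc \<open>x \<in> B\<close> by (intro lip_points_if_pointwise_lipschitz) auto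
    qed
    then have "mu {x \<in> B. \<not> D_differentiable_at D UNIV f x} = 0"
      using ae B unfolding ae_D_differentiable_def by blast
    moreover have "{x \<in> B. \<not> approx_D_differentiable_at mu D C g x} \<subseteq>
        {x \<in> B. \<not> D_differentiable_at D UNIV f x}"
      using acc fg approx_D_differentiable_at_if_D_differentiable_at by blast
    ultimately show "mu {x \<in> B. \<not> approx_D_differentiable_at mu D C g x} = 0"
      by (rule null_subset)
  qed
qed

end

theorem theorem2p9:
  fixes K :: real
    and mu :: "'a::polish_space set \<Rightarrow> ennreal"
    and D :: "('a \<times> 'b::complete_space \<times> ('a set \<times> ('a \<Rightarrow> 'b)) set) set"
  assumes "doubling_mms K mu"
    and "X_distribution D"
  shows "(differentiably_complete mu D \<longrightarrow>
            (\<forall>A (f :: 'a \<Rightarrow> 'b). A \<noteq> {} \<longrightarrow> ae_D_differentiable mu D A f))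
       \<and> ((\<forall>f :: 'a \<Rightarrow> 'b. ae_D_differentiable mu D UNIV f) \<longrightarrow> differentiably_complete mu D)"
proof -
  interpret doubling_space K mu
    by (rule doubling_space.intro) (rule assms(1))
  show ?thesis
    using ae_D_differentiable_if_differentiably_complete[OF _ assms(2)]
      differentiably_complete_if_ae_D_differentiable
    by blast
qed

end
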